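(* Let $w\in\mathbb{Q}^{V_+}_{\ge0}$ and $b\in\mathbb{Z}^{V_+}_{\ge0}$ be such that $\Pi(R)\cap[\mathbf 0,b]^N\ne\emptyset$ for every route $R$, and let $\mathcal{Q}^*(R)=\min\{\sum_{\xi\in[N]}\sum_{v\in V_+}p_\xi w_vy^\xi_v: y\in\Pi(R)\cap[\mathbf 0,b]^N\}$. Suppose values $\mathcal{Q}^*(R,v)$ are given such that for every route $R$ there exists an optimal solution $y^*$ of this minimization with $\mathcal{Q}^*(R,v)=\sum_{\xi\in[N]}p_\xi w_v(y^* )^\xi_v$ for every $v\in V_+$. Then for every route $R$ and every subroute $R'\subseteq R$, $$\sum_{v\in V_+(R')}\mathcal{Q}^*(R',v)\le\sum_{v\in V_+(R')}\mathcal{Q}^*(R,v).$$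
   Context: $G=(V,E)$ complete undirected graph with $V=\{0\}\cup V_+$ ($0$ depot, $V_+$ customers); $D=(V,A)$ replaces each edge by two opposite arcs. Capacity $C>0$; scenarios $\xi\in[N]$ with demands $d^\xi\in\mathbb{Q}^{V_+}_{\ge0}$, $d^\xi(v)\le C$, and probabilities $p_\xi\ge0$, $\sum_\xi p_\xi=1$. A route $R=(v_1,\dots,v_\ell)$ is the cycle $0,v_1,\dots,v_\ell,0$ through distinct customers, $V_+(R)=\{v_1,\dots,v_\ell\}$, $v_0=v_{\ell+1}=0$; a subroute is $R'=(v_i,\dots,v_j)$, $1\le i\le j\le\ell$. Vectors $y\in\mathbb{R}^{[N]\times V_+}$ have entries $y^\xi_v$. For a route $R$ and $\xi$, $\mathcal{Y}^\xi(R)$ is the set of $y^\xi\in\mathbb{Z}^{V_+}_{\ge0}$ for which there exist $f\in\mathbb{R}^A_{\ge0}$, $g\in\mathbb{R}^{V_+}_{\ge0}$ with $f_{(v_{i-1},v_i)}+d^\xi(v_i)=f_{(v_i,v_{i+1})}+g_{v_i}$ ($i\in[\ell]$), $f_{(v_{i-1},v_i)}\le C$ ($i\in[\ell+1]$), $g_{v_i}\le Cy^\xi_{v_i}$ ($i\in[\ell]$). $\Pi(R)=\mathcal{Y}^1(R)\times\cdots\times\mathcal{Y}^N(R)$. $[\mathbf 0,b]^N=\{y:0\le y^\xi_v\le b_v\}$. *)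

theory Defs
  imports Complex_Main
begin

(* Vertices: 'c option, where None is the depot 0 and Some v is customer v.
   Customers V_+ = UNIV :: 'c set (a finite type).
   Arcs of D: ordered pairs of vertices. *)

definition is_route :: "'c list \<Rightarrow> bool" where
  "is_route R \<longleftrightarrow> R \<noteq> [] \<and> distinct R"

(* the i-th vertex of the cycle 0,v_1,...,v_l,0 for i = 0..l+1 *)
definition rnode :: "'c list \<Rightarrow> nat \<Rightarrow> 'c option" where
  "rnode R i = (if i = 0 \<or> i > length R then None else Some (R ! (i - 1)))"

(* subroute (v_i,...,v_j), 1 <= i <= j <= l *)
definition is_subroute :: "'c list \<Rightarrow> 'c list \<Rightarrow> bool" where
  "is_subroute R' R \<longleftrightarrow>
     (\<exists>i j. 1 \<le> i \<and> i \<le> j \<and> j \<le> length R \<and> R' = drop (i - 1) (take j R))"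

(* Y^xi(R): d is the demand vector of scenario xi, C the capacity *)
definition Yset :: "real \<Rightarrow> ('c \<Rightarrow> real) \<Rightarrow> 'c list \<Rightarrow> ('c \<Rightarrow> int) set" where
  "Yset C d R = {y. (\<forall>v. 0 \<le> y v) \<and>
     (\<exists>(f :: 'c option \<times> 'c option \<Rightarrow> real) (g :: 'c \<Rightarrow> real).
        (\<forall>a. 0 \<le> f a) \<and> (\<forall>v. 0 \<le> g v) \<and>
        (\<forall>i\<in>{1..length R}.
            f (rnode R (i - 1), rnode R i) + d (R ! (i - 1))
              = f (rnode R i, rnode R (i + 1)) + g (R ! (i - 1))) \<and>
        (\<forall>i\<in>{1..length R + 1}. f (rnode R (i - 1), rnode R i) \<le> C) \<and>
        (\<forall>i\<in>{1..length R}. g (R ! (i - 1)) \<le> C * of_int (y (R ! (i - 1)))))}"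

(* Pi(R) = Y^1(R) x ... x Y^N(R); scenarios are [N] = {1..N};
   y :: nat => 'c => int, entries y xi v for xi in [N] *)
definition PiR :: "nat \<Rightarrow> real \<Rightarrow> (nat \<Rightarrow> 'c \<Rightarrow> real) \<Rightarrow> 'c list \<Rightarrow> (nat \<Rightarrow> 'c \<Rightarrow> int) set" where
  "PiR N C d R = {y. \<forall>\<xi>\<in>{1..N}. y \<xi> \<in> Yset C (d \<xi>) R}"

definition box :: "nat \<Rightarrow> ('c \<Rightarrow> int) \<Rightarrow> (nat \<Rightarrow> 'c \<Rightarrow> int) set" where
  "box N b = {y. \<forall>\<xi>\<in>{1..N}. \<forall>v. 0 \<le> y \<xi> v \<and> y \<xi> v \<le> b v}"

definition rcost :: "nat \<Rightarrow> (nat \<Rightarrow> real) \<Rightarrow> ('c::finite \<Rightarrow> real) \<Rightarrow> (nat \<Rightarrow> 'c \<Rightarrow> int) \<Rightarrow> real" where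
  "rcost N p w y = (\<Sum>\<xi>\<in>{1..N}. \<Sum>v\<in>UNIV. p \<xi> * w v * of_int (y \<xi> v))"

end

theory Submission
  imports Defs
begin

(* Restricting a feasible flow of a route R to a subroute R' = (v_i,...,v_j), with the arcs of R
   entering v_i and leaving v_j playing the role of the depot arcs, gives a feasible flow for R'.
   Hence the recourse of an optimal solution for R on V_+(R'), completed by an optimal solution
   for R' elsewhere, is feasible for R', and the optimality of the latter bounds its cost on
   V_+(R') by that of the former. *)

lemma rnode_eq_None_iff: "rnode R i = None \<longleftrightarrow> i = 0 \<or> length R < i"
  by (simp add: rnode_def)

lemma rnode_drop_take:
  assumes "0 < k" "k \<le> j - m" "j \<le> length R"
  shows "rnode (drop m (take j R)) k = rnode R (m + k)"
  using assms by (simp add: rnode_def min_def)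

lemma is_subrouteE:
  assumes "is_subroute R' R"
  obtains m j where "m < j" "j \<le> length R" "R' = drop m (take j R)"
proof -
  from assms obtain i j where "1 \<le> i" "i \<le> j" "j \<le> length R" "R' = drop (i - 1) (take j R)"
    unfolding is_subroute_def by blast
  then show thesis by (intro that[of "i - 1" j]) auto
qed

lemma is_route_subroute:
  assumes "is_route R" "is_subroute R' R"
  shows "is_route R'"
proof -
  from assms(2) obtain m j where "m < j" "j \<le> length R" "R' = drop m (take j R)"
    by (rule is_subrouteE)
  with assms(1) show ?thesis by (simp add: is_route_def)
qed

lemma Yset_drop_take:
  assumes y: "y \<in> Yset C d R" and mj: "m < j" "j \<le> length R"
    and agree: "\<forall>v\<in>set (drop m (take j R)). z v = y v" and z_nonneg: "\<forall>v. 0 \<le> z v"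
  shows "z \<in> Yset C d (drop m (take j R))"
proof -
  let ?R' = "drop m (take j R)"
  have len: "length ?R' = j - m" using mj by simp
  have nth: "?R' ! (i - 1) = R ! (m + i - 1)" if "1 \<le> i" "i \<le> j - m" for i
    using that mj by simp
  from y obtain f and g :: "'a \<Rightarrow> real" where f_nonneg: "\<forall>a. 0 \<le> f a" and g_nonneg: "\<forall>v. 0 \<le> g v"
    and balance: "\<forall>i\<in>{1..length R}. f (rnode R (i - 1), rnode R i) + d (R ! (i - 1))
              = f (rnode R i, rnode R (i + 1)) + g (R ! (i - 1))"
    and cap: "\<forall>i\<in>{1..length R + 1}. f (rnode R (i - 1), rnode R i) \<le> C"
    and g_le: "\<forall>i\<in>{1..length R}. g (R ! (i - 1)) \<le> C * of_int (y (R ! (i - 1)))"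
    unfolding Yset_def by blast
  define enter where "enter a = (if a = None then rnode R m else a)" for a
  define leave where "leave b = (if b = None then rnode R (j + 1) else b)" for b
  define f' where "f' = (\<lambda>(a, b). f (enter a, leave b))"
  have arc: "f' (rnode ?R' (k - 1), rnode ?R' k) = f (rnode R (m + k - 1), rnode R (m + k))"
    if "1 \<le> k" "k \<le> j - m + 1" for k
  proof -
    have "enter (rnode ?R' (k - 1)) = rnode R (m + k - 1)"
      using that mj rnode_drop_take[of "k - 1" j m R]
      by (cases "k = 1") (auto simp: enter_def rnode_eq_None_iff)
    moreover have "leave (rnode ?R' k) = rnode R (m + k)"
      using that mj rnode_drop_take[of k j m R]
      by (cases "k = j - m + 1") (auto simp: leave_def rnode_eq_None_iff)
    ultimately show ?thesis by (simp add: f'_def)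
  qed
  show ?thesis unfolding Yset_def
  proof (intro CollectI conjI exI[of _ "f'"] exI[of _ g] ballI)
    fix i assume "i \<in> {1..length ?R'}"
    then have i: "1 \<le> i" "i \<le> j - m" and mi: "m + i \<in> {1..length R}" using len mj by auto
    show "f' (rnode ?R' (i - 1), rnode ?R' i) + d (?R' ! (i - 1))
        = f' (rnode ?R' i, rnode ?R' (i + 1)) + g (?R' ! (i - 1))"
      using balance[rule_format, OF mi] arc[of i] arc[of "i + 1"] nth[OF i] i by simp
    have "?R' ! (i - 1) \<in> set ?R'" using i len by (intro nth_mem) simp
    then show "g (?R' ! (i - 1)) \<le> C * of_int (z (?R' ! (i - 1)))"
      using g_le[rule_format, OF mi] nth[OF i] agree by simp
  next
    fix i assume "i \<in> {1..length ?R' + 1}"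
    then have i: "1 \<le> i" "i \<le> j - m + 1" and mi: "m + i \<in> {1..length R + 1}" using len mj by auto
    show "f' (rnode ?R' (i - 1), rnode ?R' i) \<le> C"
      using cap[rule_format, OF mi] arc[OF i] by simp
  qed (use f_nonneg g_nonneg z_nonneg in \<open>auto simp: f'_def\<close>)
qed

lemma Yset_subroute:
  assumes "y \<in> Yset C d R" "is_subroute R' R"
    and "\<forall>v\<in>set R'. z v = y v" "\<forall>v. 0 \<le> z v"
  shows "z \<in> Yset C d R'"
proof -
  from assms(2) obtain m j where "m < j" "j \<le> length R" "R' = drop m (take j R)"
    by (rule is_subrouteE)
  with assms(1,3,4) show ?thesis by (metis Yset_drop_take)
qed

lemma patch_in_PiR_box_subroute:
  assumes "y \<in> PiR N C d R \<inter> box N b" "y' \<in> box N b" "is_subroute R' R"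
  shows "(\<lambda>\<xi> v. if v \<in> set R' then y \<xi> v else y' \<xi> v) \<in> PiR N C d R' \<inter> box N b"
    (is "?z \<in> _")
proof
  show "?z \<in> box N b" using assms(1,2) by (auto simp: box_def)
  show "?z \<in> PiR N C d R'"
  proof (unfold PiR_def, intro CollectI ballI)
    fix \<xi> assume "\<xi> \<in> {1..N}"
    with assms(1) \<open>?z \<in> box N b\<close> show "?z \<xi> \<in> Yset C (d \<xi>) R'"
      by (intro Yset_subroute[OF _ assms(3)]) (auto simp: PiR_def box_def)
  qed
qed

definition vertex_cost :: "nat \<Rightarrow> (nat \<Rightarrow> real) \<Rightarrow> ('c \<Rightarrow> real) \<Rightarrow> (nat \<Rightarrow> 'c \<Rightarrow> int) \<Rightarrow> 'c \<Rightarrow> real"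
  where "vertex_cost N p w y v = (\<Sum>\<xi>\<in>{1..N}. p \<xi> * w v * of_int (y \<xi> v))"

lemma rcost_eq_sum_vertex_cost: "rcost N p w y = (\<Sum>v\<in>UNIV. vertex_cost N p w y v)"
  unfolding rcost_def vertex_cost_def by (rule sum.swap)

lemma sum_vertex_cost_minimizer_le:
  fixes y y' :: "nat \<Rightarrow> 'c::finite \<Rightarrow> int"
  assumes min: "\<forall>x\<in>Y. rcost N p w y' \<le> rcost N p w x"
    and patch: "(\<lambda>\<xi> v. if v \<in> S then y \<xi> v else y' \<xi> v) \<in> Y" (is "?z \<in> Y")
  shows "(\<Sum>v\<in>S. vertex_cost N p w y' v) \<le> (\<Sum>v\<in>S. vertex_cost N p w y v)"
proof -
  have split: "rcost N p w x
      = (\<Sum>v\<in>S. vertex_cost N p w x v) + (\<Sum>v\<in>UNIV - S. vertex_cost N p w x v)"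
    for x :: "nat \<Rightarrow> 'c \<Rightarrow> int"
    unfolding rcost_eq_sum_vertex_cost using sum.subset_diff[of S UNIV] by (simp add: add.commute)
  have "(\<Sum>v\<in>S. vertex_cost N p w ?z v) = (\<Sum>v\<in>S. vertex_cost N p w y v)"
    by (rule sum.cong) (auto simp: vertex_cost_def)
  moreover have "(\<Sum>v\<in>UNIV - S. vertex_cost N p w ?z v) = (\<Sum>v\<in>UNIV - S. vertex_cost N p w y' v)"
    by (rule sum.cong) (auto simp: vertex_cost_def)
  moreover have "rcost N p w y' \<le> rcost N p w ?z" using min patch by blast
  ultimately show ?thesis using split[of y'] split[of ?z] by linarith
qed

theorem corollary2:
  fixes N :: nat and C :: real
    and d :: "nat \<Rightarrow> 'c::finite \<Rightarrow> real"
    and p :: "nat \<Rightarrow> real"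
    and w :: "'c \<Rightarrow> real" and b :: "'c \<Rightarrow> int"
    and Qv :: "'c list \<Rightarrow> 'c \<Rightarrow> real"
  assumes C_pos: "C > 0"
    and d_rat: "\<forall>\<xi>\<in>{1..N}. \<forall>v. d \<xi> v \<in> \<rat> \<and> 0 \<le> d \<xi> v \<and> d \<xi> v \<le> C"
    and p_nonneg: "\<forall>\<xi>\<in>{1..N}. 0 \<le> p \<xi>"
    and p_sum: "(\<Sum>\<xi>\<in>{1..N}. p \<xi>) = 1"
    and w_rat: "\<forall>v. w v \<in> \<rat> \<and> 0 \<le> w v"
    and b_nonneg: "\<forall>v. 0 \<le> b v"
    and feasible: "\<forall>R. is_route R \<longrightarrow> PiR N C d R \<inter> box N b \<noteq> {}"
    and Qv_opt: "\<forall>R. is_route R \<longrightarrow>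
        (\<exists>ys. ys \<in> PiR N C d R \<inter> box N b \<and>
              (\<forall>y \<in> PiR N C d R \<inter> box N b. rcost N p w ys \<le> rcost N p w y) \<and>
              (\<forall>v. Qv R v = (\<Sum>\<xi>\<in>{1..N}. p \<xi> * w v * of_int (ys \<xi> v))))"
  shows "\<forall>R R'. is_route R \<and> is_subroute R' R \<longrightarrow>
           (\<Sum>v\<in>set R'. Qv R' v) \<le> (\<Sum>v\<in>set R'. Qv R v)"
proof (intro allI impI, elim conjE)
  fix R R' :: "'c list"
  assume route: "is_route R" and sub: "is_subroute R' R"
  obtain ys where ys: "ys \<in> PiR N C d R \<inter> box N b" and Q: "\<forall>v. Qv R v = vertex_cost N p w ys v"
    using Qv_opt route unfolding vertex_cost_def by blast
  obtain ys' where ys': "ys' \<in> PiR N C d R' \<inter> box N b"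
    and min: "\<forall>y \<in> PiR N C d R' \<inter> box N b. rcost N p w ys' \<le> rcost N p w y"
    and Q': "\<forall>v. Qv R' v = vertex_cost N p w ys' v"
    using Qv_opt is_route_subroute[OF route sub] unfolding vertex_cost_def by blast
  have "(\<lambda>\<xi> v. if v \<in> set R' then ys \<xi> v else ys' \<xi> v) \<in> PiR N C d R' \<inter> box N b"
    using ys ys' sub by (intro patch_in_PiR_box_subroute) auto
  with min have "(\<Sum>v\<in>set R'. vertex_cost N p w ys' v) \<le> (\<Sum>v\<in>set R'. vertex_cost N p w ys v)"
    by (rule sum_vertex_cost_minimizer_le)
  with Q Q' show "(\<Sum>v\<in>set R'. Qv R' v) \<le> (\<Sum>v\<in>set R'. Qv R v)" by simp
qed

end
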